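(* Let $m,n\in\mathbb{N}$ be coprime with $1\le m\le n-1$, and let $\Gamma$ be a $\mathbb{D}_n$-symmetric billiard curve with equivariant parametrization $\gamma$. An $n$-periodic billiard sequence $Z\in\Gamma^{\mathbb{Z}}$ of rotation number $\frac mn$ is $\mathbb{D}_n$-symmetric if and only if it has a lift of the form $$X_i=\frac{A}{2n}+\frac mn i\quad\text{for some }A\in\mathbb{Z}.$$ Every such sequence is a billiard orbit. Two such orbits are geometrically equal if and only if their lifts of this form differ by an integer multiple of $\frac1n$. In particular, $\Gamma$ has exactly two geometrically distinct $n$-periodic $\mathbb{D}_n$-symmetric Birkhoff billiard orbits of rotation number $\frac mn$.
   Context: $\mathbb{D}_n=\langle R,S\rangle$, where $R$ is counterclockwise rotation by $2\pi/n$ and $S$ is the horizontal reflection. $\Gamma$ is a $C^2$ simple closed $\mathbb{D}_n$-invariant curve bounding a strictly convex domain, parametrized counterclockwise by a $1$-periodic $C^2$ immersion $\gamma$ descending to an embedding of $\mathbb{R}/\mathbb{Z}$, with $\gamma(x+1/n)=R\gamma(x)$ and $\gamma(-x)=S\gamma(x)$. A billiard sequence has $Z_i\ne Z_{i+1}$, with lift $X$ ($\gamma(X_i)=Z_i$, $0<X_{i+1}-X_i<1$). A billiard orbit satisfies the reflection law at each point. $Z$ is $\mathbb{D}_n$-symmetric if every $g\in\mathbb{D}_n$ satisfies, for some $k$, $g(Z_i)=Z_{k+i}$ for all $i$ or $g(Z_i)=Z_{k-i}$ for all $i$. Birkhoff means the lift satisfies $X_i\le X_j+l\Rightarrow X_{i+m}\le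 X_{j+m}+l$ for all integers. $Z,Z'$ are geometrically equal if for some $k$, $Z_i=Z'_{k+i}$ for all $i$ or $Z_i=Z'_{k-i}$ for all $i$; otherwise they are geometrically distinct. *)

theory Defs
  imports "HOL-Complex_Analysis.Winding_Numbers"
begin

definition rotR :: "nat \<Rightarrow> complex \<Rightarrow> complex" where
  "rotR n z = cis (2 * pi / real n) * z"

definition reflS :: "complex \<Rightarrow> complex" where
  "reflS z = cnj z"

text \<open>The dihedral group D_n generated by R and S (as a finite group, the
submonoid generated by R and S is the generated group).\<close>
inductive_set dihedral :: "nat \<Rightarrow> (complex \<Rightarrow> complex) set" for n where
  dih_id: "id \<in> dihedral n"
| dih_R: "g \<in> dihedral n \<Longrightarrow> rotR n \<circ> g \<in> dihedral n"
| dih_S: "g \<in> dihedral n \<Longrightarrow> reflS \<circ> g \<in> dihedral n"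

definition strictly_convex_set :: "complex set \<Rightarrow> bool" where
  "strictly_convex_set S \<longleftrightarrow> convex S \<and>
     (\<forall>x\<in>closure S. \<forall>y\<in>closure S. x \<noteq> y \<longrightarrow> open_segment x y \<subseteq> interior S)"

definition C2_function :: "(real \<Rightarrow> complex) \<Rightarrow> bool" where
  "C2_function g \<longleftrightarrow> (\<exists>g' g''. (\<forall>x. (g has_vector_derivative g' x) (at x))
      \<and> (\<forall>x. (g' has_vector_derivative g'' x) (at x)) \<and> continuous_on UNIV g'')"

definition Dn_billiard_param :: "nat \<Rightarrow> (real \<Rightarrow> complex) \<Rightarrow> bool" where
  "Dn_billiard_param n \<gamma> \<longleftrightarrow>
     C2_function \<gamma> \<and>
     (\<forall>x. vector_derivative \<gamma> (at x) \<noteq> 0) \<and>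
     (\<forall>x y. \<gamma> x = \<gamma> y \<longleftrightarrow> x - y \<in> \<int>) \<and>
     strictly_convex_set (inside (range \<gamma>)) \<and>
     (\<forall>p \<in> inside (range \<gamma>). winding_number \<gamma> p = 1) \<and>
     (\<forall>g \<in> dihedral n. g ` range \<gamma> = range \<gamma>) \<and>
     (\<forall>x. \<gamma> (x + 1 / real n) = rotR n (\<gamma> x)) \<and>
     (\<forall>x. \<gamma> (- x) = reflS (\<gamma> x))"

definition is_lift :: "(real \<Rightarrow> complex) \<Rightarrow> (int \<Rightarrow> complex) \<Rightarrow> (int \<Rightarrow> real) \<Rightarrow> bool" where
  "is_lift \<gamma> Z X \<longleftrightarrow> (\<forall>i. \<gamma> (X i) = Z i \<and> 0 < X (i + 1) - X i \<and> X (i + 1) - X i < 1)"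

definition billiard_seq :: "(real \<Rightarrow> complex) \<Rightarrow> (int \<Rightarrow> complex) \<Rightarrow> bool" where
  "billiard_seq \<gamma> Z \<longleftrightarrow> (\<forall>i. Z i \<in> range \<gamma> \<and> Z i \<noteq> Z (i + 1))"

text \<open>Reflection law at Z i: the sum of the unit vectors pointing to the previous and
the next point is orthogonal to the tangent of the curve at Z i.\<close>
definition billiard_orbit :: "(real \<Rightarrow> complex) \<Rightarrow> (int \<Rightarrow> complex) \<Rightarrow> bool" where
  "billiard_orbit \<gamma> Z \<longleftrightarrow> billiard_seq \<gamma> Z \<and>
     (\<forall>i x. \<gamma> x = Z i \<longrightarrow>
        inner ((Z (i - 1) - Z i) / of_real (norm (Z (i - 1) - Z i))
             + (Z (i + 1) - Z i) / of_real (norm (Z (i + 1) - Z i)))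
              (vector_derivative \<gamma> (at x)) = 0)"

definition periodic_seq :: "nat \<Rightarrow> (int \<Rightarrow> complex) \<Rightarrow> bool" where
  "periodic_seq n Z \<longleftrightarrow> (\<forall>i. Z (i + int n) = Z i)"

definition has_rotation_number :: "(real \<Rightarrow> complex) \<Rightarrow> (int \<Rightarrow> complex) \<Rightarrow> real \<Rightarrow> bool" where
  "has_rotation_number \<gamma> Z \<rho> \<longleftrightarrow>
     (\<exists>X. is_lift \<gamma> Z X \<and> (\<lambda>k::nat. X (int k) / real k) \<longlonglongrightarrow> \<rho>)"

definition Dn_symmetric :: "nat \<Rightarrow> (int \<Rightarrow> complex) \<Rightarrow> bool" where
  "Dn_symmetric n Z \<longleftrightarrow> (\<forall>g \<in> dihedral n. \<exists>k::int.
      (\<forall>i. g (Z i) = Z (k + i)) \<or> (\<forall>i. g (Z i) = Z (k - i)))"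

definition birkhoff :: "(real \<Rightarrow> complex) \<Rightarrow> (int \<Rightarrow> complex) \<Rightarrow> bool" where
  "birkhoff \<gamma> Z \<longleftrightarrow> (\<exists>X. is_lift \<gamma> Z X \<and>
     (\<forall>i j l k :: int. X i \<le> X j + l \<longrightarrow> X (i + k) \<le> X (j + k) + l))"

definition geom_equal :: "(int \<Rightarrow> complex) \<Rightarrow> (int \<Rightarrow> complex) \<Rightarrow> bool" where
  "geom_equal Z Z' \<longleftrightarrow> (\<exists>k::int. (\<forall>i. Z i = Z' (k + i)) \<or> (\<forall>i. Z i = Z' (k - i)))"

definition sym_lift :: "nat \<Rightarrow> nat \<Rightarrow> int \<Rightarrow> int \<Rightarrow> real" where
  "sym_lift n m A i = real_of_int A / (2 * real n) + real m / real n * real_of_int i"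

end

(* If R maps an n-periodic sequence Z of rotation number m/n to a shift Z (k + i), the
   increments of its lift are periodic with periods k and n, and k m = 1 mod n makes these
   coprime: the lift is x0 + (m/n) i. The orientation-reversing alternative Z (k - i) would
   make R R fix a point of Gamma, so n divides 2 and it is a shift after all. The reflection
   S then puts x0 into (1/2n) Z. Conversely, as m is invertible mod n, every such sequence
   is D_n-invariant, and at each of its points the reflection of Gamma fixing that point
   swaps the two neighbours, which is the reflection law. Two of them coincide
   geometrically iff their numerators A have the same parity, which leaves two classes. *)
theory Submission
  imports Defs
begin

lemma int_seq_const_if_step:
  fixes f :: "int \<Rightarrow> 'a"
  assumes "\<And>i. f (i + 1) = f i"
  shows "f i = f 0"
proof (induct i rule: int_induct[where k=0])
  case (step2 i)
  then show ?case using assms[of "i - 1"] by simp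
qed (use assms in simp_all)

lemma int_seq_translate_mult:
  fixes X :: "int \<Rightarrow> 'a::ring_1"
  assumes "\<And>i. X (i + p) = X i + \<delta>"
  shows "X (i + j * p) = X i + of_int j * \<delta>"
proof -
  have "X (i + j * p) - of_int j * \<delta> = X (i + 0 * p) - of_int 0 * \<delta>"
  proof (rule int_seq_const_if_step[where f = "\<lambda>j. X (i + j * p) - of_int j * \<delta>"])
    fix j
    have "X (i + (j + 1) * p) = X (i + j * p) + \<delta>"
      using assms[of "i + j * p"] by (simp add: algebra_simps)
    then show "X (i + (j + 1) * p) - of_int (j + 1) * \<delta> = X (i + j * p) - of_int j * \<delta>"
      by (simp add: algebra_simps)
  qed
  then show ?thesis by (simp add: diff_eq_eq)
qed

lemma int_seq_periodic_mult:
  fixes f :: "int \<Rightarrow> 'a"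
  assumes "\<And>i. f (i + p) = f i"
  shows "f (i + j * p) = f i"
proof -
  have "f (i + j * p) = f (i + 0 * p)"
    by (rule int_seq_const_if_step[where f = "\<lambda>j. f (i + j * p)"])
       (metis assms add.assoc distrib_right mult_1)
  then show ?thesis by simp
qed

lemma int_seq_const_if_coprime_periods:
  fixes f :: "int \<Rightarrow> 'a"
  assumes "\<And>i. f (i + p) = f i" "\<And>i. f (i + q) = f i" and "a * p + b * q = 1"
  shows "f i = f 0"
proof (rule int_seq_const_if_step)
  fix i
  have "f (i + a * p + b * q) = f i"
    using int_seq_periodic_mult[where f = f, OF assms(2)] int_seq_periodic_mult[where f = f, OF assms(1)]
    by simp
  then show "f (i + 1) = f i"
    using assms(3) by (simp add: add.assoc)
qed

lemma Ints_seq_const_if_small_steps: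
  fixes f :: "int \<Rightarrow> 'a::linordered_idom"
  assumes "\<And>i. f i \<in> \<int>" and "\<And>i. \<bar>f (i + 1) - f i\<bar> < 1"
  shows "f i = f 0"
  by (rule int_seq_const_if_step) (use assms Ints_eq_abs_less1 in blast)

lemma coprime_linear_congruence_solvable:
  fixes m n :: nat and b :: int
  assumes "coprime m n"
  shows "\<exists>k. int n dvd int m * k - b"
proof -
  obtain u v where uv: "u * int m + v * int n = 1"
    using bezout_int[of "int m" "int n"] assms by (auto simp: coprime_iff_gcd_eq_1)
  have "int m * (u * b) - b = int n * (- v * b)"
    using uv by (simp add: algebra_simps flip: eq_diff_eq)
  then have "int n dvd int m * (u * b) - b" by (rule dvdI)
  then show ?thesis ..
qed

lemma of_int_divide_in_Ints_iff:
  assumes "n > 0"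
  shows "real_of_int a / real n \<in> \<int> \<longleftrightarrow> int n dvd a"
proof
  assume "real_of_int a / real n \<in> \<int>"
  then obtain c where "real_of_int a / real n = of_int c" by (auto elim: Ints_cases)
  then have "real_of_int a = real_of_int (int n * c)" using assms by (simp add: field_simps)
  then show "int n dvd a" by (simp only: of_int_eq_iff) simp
next
  assume "int n dvd a"
  then obtain c where "a = int n * c" ..
  then show "real_of_int a / real n \<in> \<int>" using assms by simp
qed

lemma inner_reflected_sum_eq_0:
  fixes c w T :: complex
  assumes "c * cnj T = - T"
  shows "inner (c * cnj w + w) T = 0"
proof -
  have "inner (c * cnj w + w) T = Re ((c * cnj w + w) * cnj T)"
    by (simp add: inner_complex_def)
  also have "\<dots> = Re (w * cnj T - cnj (w * cnj T))"
    using assms by (simp add: algebra_simps flip: mult.assoc)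
  also have "\<dots> = 0" by simp
  finally show ?thesis .
qed

lemma tangent_reversed_by_reflection:
  fixes \<gamma> :: "real \<Rightarrow> complex"
  assumes "\<gamma> differentiable at x" and "\<And>y. \<gamma> (2 * x - y) = c * cnj (\<gamma> y)"
  shows "c * cnj (vector_derivative \<gamma> (at x)) = - vector_derivative \<gamma> (at x)"
proof -
  define T where "T = vector_derivative \<gamma> (at x)"
  have der: "(\<gamma> has_vector_derivative T) (at x)"
    using assms(1) unfolding T_def by (rule vector_derivative_works[THEN iffD1])
  have "((\<lambda>y. 2 * x - y) has_vector_derivative -1) (at x)"
    by (auto intro!: derivative_eq_intros)
  moreover have "(\<gamma> has_vector_derivative T) (at ((\<lambda>y. 2 * x - y) x))"
    using der by simp
  ultimately have "((\<gamma> \<circ> (\<lambda>y. 2 * x - y)) has_vector_derivative - T) (at x)"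
    by (auto dest: vector_diff_chain_at)
  moreover have "\<gamma> \<circ> (\<lambda>y. 2 * x - y) = (\<lambda>y. c * cnj (\<gamma> y))"
    using assms(2) by (simp add: comp_def)
  moreover have "((\<lambda>y. c * cnj (\<gamma> y)) has_vector_derivative c * cnj T) (at x)"
    by (intro has_vector_derivative_mult_right has_vector_derivative_cnj der)
  ultimately show ?thesis
    unfolding T_def[symmetric] by (metis vector_derivative_unique_at)
qed

text \<open>The reflection fixes the point at x and swaps the points at x - s and x + s, so the two
  unit chords at x are mirror images in the normal line.\<close>
lemma reflection_law_at_symmetry_point:
  fixes \<gamma> :: "real \<Rightarrow> complex"
  assumes "\<gamma> differentiable at x" and "\<And>y. \<gamma> (2 * x - y) = c * cnj (\<gamma> y)" and "norm c = 1"
  shows "inner ((\<gamma> (x - s) - \<gamma> x) / of_real (norm (\<gamma> (x - s) - \<gamma> x))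
               + (\<gamma> (x + s) - \<gamma> x) / of_real (norm (\<gamma> (x + s) - \<gamma> x)))
           (vector_derivative \<gamma> (at x)) = 0"
proof -
  define u where "u = \<gamma> (x + s) - \<gamma> x"
  have "\<gamma> (x - s) - \<gamma> x = c * cnj u"
    using assms(2)[of "x + s"] assms(2)[of x] unfolding u_def by (simp add: algebra_simps)
  moreover have "norm (c * cnj u) = norm u"
    using assms(3) by (simp add: norm_mult)
  ultimately have "(\<gamma> (x - s) - \<gamma> x) / of_real (norm (\<gamma> (x - s) - \<gamma> x))
      = c * cnj (u / of_real (norm u))"
    by simp
  then show ?thesis
    unfolding u_def[symmetric]
    by (metis inner_reflected_sum_eq_0 tangent_reversed_by_reflection assms(1,2))
qed

locale equivariant_param =
  fixes n :: nat and \<gamma> :: "real \<Rightarrow> complex"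
  assumes n_pos: "0 < n"
    and gamma_eq_iff: "\<gamma> x = \<gamma> y \<longleftrightarrow> x - y \<in> \<int>"
    and gamma_rotR: "\<gamma> (x + 1 / real n) = rotR n (\<gamma> x)"
    and gamma_reflS: "\<gamma> (- x) = reflS (\<gamma> x)"
    and gamma_differentiable: "\<gamma> differentiable at x"

lemma Dn_billiard_param_imp_equivariant_param:
  assumes "Dn_billiard_param n \<gamma>" and "0 < n"
  shows "equivariant_param n \<gamma>"
proof
  from assms(1) obtain \<gamma>' where "\<And>x. (\<gamma> has_vector_derivative \<gamma>' x) (at x)"
    unfolding Dn_billiard_param_def C2_function_def by blast
  then show "\<gamma> differentiable at x" for x by (rule differentiableI_vector)
qed (use assms in \<open>auto simp: Dn_billiard_param_def\<close>)

context equivariant_param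
begin

lemma rotR_in_dihedral: "rotR n \<in> dihedral n"
  using dihedral.dih_R[OF dihedral.dih_id, of n] by simp

lemma reflS_in_dihedral: "reflS \<in> dihedral n"
  using dihedral.dih_S[OF dihedral.dih_id, of n] by simp

lemma dihedral_acts_on_parameter:
  assumes "g \<in> dihedral n"
  shows "\<exists>a::int. (\<forall>x. g (\<gamma> x) = \<gamma> (x + a / n)) \<or> (\<forall>x. g (\<gamma> x) = \<gamma> (a / n - x))"
  using assms
proof induct
  case dih_id
  show ?case by (intro exI[of _ 0]) simp
next
  case (dih_R g)
  then obtain a :: int
    where "(\<forall>x. g (\<gamma> x) = \<gamma> (x + a / n)) \<or> (\<forall>x. g (\<gamma> x) = \<gamma> (a / n - x))" by blast
  then show ?case
  proof
    assume "\<forall>x. g (\<gamma> x) = \<gamma> (x + a / n)"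
    then have "\<forall>x. (rotR n \<circ> g) (\<gamma> x) = \<gamma> (x + (a + 1) / n)"
      by (simp add: gamma_rotR[symmetric] add_divide_distrib algebra_simps)
    then show ?case by blast
  next
    assume "\<forall>x. g (\<gamma> x) = \<gamma> (a / n - x)"
    then have "\<forall>x. (rotR n \<circ> g) (\<gamma> x) = \<gamma> ((a + 1) / n - x)"
      by (simp add: gamma_rotR[symmetric] add_divide_distrib algebra_simps)
    then show ?case by blast
  qed
next
  case (dih_S g)
  then obtain a :: int
    where "(\<forall>x. g (\<gamma> x) = \<gamma> (x + a / n)) \<or> (\<forall>x. g (\<gamma> x) = \<gamma> (a / n - x))" by blast
  then show ?case
  proof
    assume "\<forall>x. g (\<gamma> x) = \<gamma> (x + a / n)"
    then have "\<forall>x. (reflS \<circ> g) (\<gamma> x) = \<gamma> ((- a) / n - x)"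
      by (auto simp: gamma_reflS[symmetric] intro!: arg_cong[where f = \<gamma>])
    then show ?case by blast
  next
    assume "\<forall>x. g (\<gamma> x) = \<gamma> (a / n - x)"
    then have "\<forall>x. (reflS \<circ> g) (\<gamma> x) = \<gamma> (x + (- a) / n)"
      by (simp add: gamma_reflS[symmetric] algebra_simps)
    then show ?case by blast
  qed
qed

lemma gamma_reflection_nat:
  "\<gamma> (real a / real n - y) = cis (2 * pi / real n) ^ a * cnj (\<gamma> y)"
proof (induct a arbitrary: y)
  case 0
  then show ?case using gamma_reflS[of y] by (simp add: reflS_def)
next
  case (Suc a)
  have "\<gamma> (real (Suc a) / real n - y) = rotR n (\<gamma> (real a / real n - y))"
    by (simp add: gamma_rotR[symmetric] add_divide_distrib algebra_simps)
  then show ?case by (simp add: Suc rotR_def)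
qed

lemma gamma_reflection:
  "\<exists>c. norm c = 1 \<and> (\<forall>y. \<gamma> (real_of_int b / real n - y) = c * cnj (\<gamma> y))"
proof -
  define a where "a = nat (b mod int n)"
  have "int a = b mod int n" unfolding a_def using n_pos by simp
  then have "b = (b div int n) * int n + int a" by simp
  then have "real_of_int b = real_of_int (b div int n) * real n + real a"
    by (metis of_int_add of_int_mult of_int_of_nat_eq)
  then have "real_of_int b / real n - y - (real a / real n - y) \<in> \<int>" for y
    using n_pos by (simp add: field_simps)
  then have "\<gamma> (real_of_int b / real n - y) = \<gamma> (real a / real n - y)" for y
    by (simp only: gamma_eq_iff)
  then show ?thesis
    by (intro exI[of _ "cis (2 * pi / real n) ^ a"]) (simp add: gamma_reflection_nat norm_power)
qed

lemma lift_diff_in_Ints: "is_lift \<gamma> Z X \<Longrightarrow> Z a = Z b \<Longrightarrow> X a - X b \<in> \<int>"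
  unfolding is_lift_def using gamma_eq_iff by metis

lemma lift_step_bounds: "is_lift \<gamma> Z X \<Longrightarrow> 0 < X (i + 1) - X i \<and> X (i + 1) - X i < 1"
  unfolding is_lift_def by blast

lemma is_lift_imp_billiard_seq:
  assumes "is_lift \<gamma> Z X"
  shows "billiard_seq \<gamma> Z"
  unfolding billiard_seq_def
proof (intro allI conjI)
  fix i
  show "Z i \<in> range \<gamma>" using assms unfolding is_lift_def by (metis rangeI)
  have "X (i + 1) - X i \<notin> \<int>"
    using lift_step_bounds[OF assms, of i] by (auto elim!: Ints_cases)
  then show "Z i \<noteq> Z (i + 1)"
    using lift_diff_in_Ints[OF assms, of "i + 1" i] by auto
qed

lemma lift_translate_period:
  assumes X: "is_lift \<gamma> Z X" and per: "periodic_seq n Z"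
    and lim: "(\<lambda>k::nat. X (int k) / real k) \<longlonglongrightarrow> \<rho>"
  shows "X (i + int n) = X i + real n * \<rho>"
proof -
  define f where "f i = X (i + int n) - X i" for i
  have "f i \<in> \<int>" for i
    unfolding f_def by (rule lift_diff_in_Ints[OF X]) (use per in \<open>simp add: periodic_seq_def\<close>)
  moreover have "\<bar>f (i + 1) - f i\<bar> < 1" for i
    using lift_step_bounds[OF X, of i] lift_step_bounds[OF X, of "i + int n"]
    unfolding f_def by (simp add: abs_less_iff algebra_simps)
  ultimately have f_const: "f i = f 0" for i
    by (rule Ints_seq_const_if_small_steps[of f])
  define p where "p = f 0"
  have X_period: "X (i + int n) = X i + p" for i
    using f_const[of i] unfolding f_def p_def by simp
  have X_mult: "X (int (Suc k * n)) = X 0 + real (Suc k) * p" for k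
    using int_seq_translate_mult[where X = X, OF X_period, of 0 "int (Suc k)"]
    by (simp only: add_0_left of_int_of_nat_eq of_nat_mult)
  have "strict_mono (\<lambda>k. Suc k * n)"
    by (rule strict_monoI) (use n_pos in simp)
  from LIMSEQ_subseq_LIMSEQ[OF lim this]
  have lim_\<rho>: "(\<lambda>k. X (int (Suc k * n)) / real (Suc k * n)) \<longlonglongrightarrow> \<rho>"
    by (simp add: comp_def)
  have "X (int (Suc k * n)) / real (Suc k * n) = (X 0 / real n) / real (Suc k) + p / real n"
    for k
  proof -
    have "X (int (Suc k * n)) / real (Suc k * n) = (X 0 + real (Suc k) * p) / (real (Suc k) * real n)"
      unfolding X_mult by (simp only: of_nat_mult)
    also have "\<dots> = (X 0 / real n) / real (Suc k) + p / real n"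
      using n_pos by (simp del: of_nat_Suc add: add_divide_distrib)
    finally show ?thesis .
  qed
  moreover have "(\<lambda>k. (X 0 / real n) / real (Suc k) + p / real n) \<longlonglongrightarrow> 0 + p / real n"
    by (intro tendsto_add LIMSEQ_Suc[OF lim_const_over_n] tendsto_const)
  ultimately have "(\<lambda>k. X (int (Suc k * n)) / real (Suc k * n)) \<longlonglongrightarrow> p / real n"
    by simp
  from LIMSEQ_unique[OF this lim_\<rho>] have "p / real n = \<rho>" .
  then have "p = real n * \<rho>"
    using n_pos by (simp add: field_simps)
  then show ?thesis
    using X_period[of i] by simp
qed

text \<open>R R would fix Z 0, which forces n to divide 2; for such n the n-periodic sequence
  satisfies Z (k - i) = Z (k + i).\<close>
lemma rotation_reversing_imp_preserving:
  assumes "Z 0 \<in> range \<gamma>" and per: "periodic_seq n Z" and k: "\<forall>i. rotR n (Z i) = Z (k - i)"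
  shows "\<forall>i. rotR n (Z i) = Z (k + i)"
proof -
  obtain x where x: "Z 0 = \<gamma> x" using assms(1) by auto
  have "\<gamma> (x + 1 / real n + 1 / real n) = rotR n (rotR n (Z 0))"
    unfolding x by (simp only: gamma_rotR)
  also have "\<dots> = \<gamma> x"
    using k[rule_format, of 0] k[rule_format, of k] x by simp
  finally have "real_of_int 2 / real n \<in> \<int>"
    by (simp add: gamma_eq_iff)
  then obtain q where q: "2 = int n * q"
    using of_int_divide_in_Ints_iff[OF n_pos] by blast
  have "Z (k - i + (i * q) * int n) = Z (k - i)" for i
    by (rule int_seq_periodic_mult) (use per in \<open>simp add: periodic_seq_def\<close>)
  moreover have "k - i + (i * q) * int n = k + i" for i
    using q by (simp add: mult.commute)
  ultimately show ?thesis
    using k by simp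
qed

text \<open>Y i = X i - i m / n is n-periodic and translates by a constant under i \<mapsto> i + k;
  comparing Y (n k) both ways makes that constant 0 and gives k m - c n = 1, so Y has
  coprime periods k and n.\<close>
lemma lift_arithmetic_if_rotation_preserving:
  assumes X: "is_lift \<gamma> Z X" and X_period: "\<And>i. X (i + int n) = X i + real m"
    and k: "\<forall>i. rotR n (Z i) = Z (k + i)"
  shows "X i = X 0 + of_int i * (real m / real n)"
proof -
  define Y where "Y i = X i - of_int i * (real m / real n)" for i
  have Y_n: "Y (i + int n) = Y i" for i
    unfolding Y_def using X_period[of i] n_pos by (simp add: field_simps)
  define f where "f i = X (k + i) - X i - 1 / real n" for i
  have "f i \<in> \<int>" for i
  proof -
    have "\<gamma> (X (k + i)) = rotR n (\<gamma> (X i))"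
      using k X unfolding is_lift_def by simp
    then have "\<gamma> (X (k + i)) = \<gamma> (X i + 1 / real n)"
      by (simp only: gamma_rotR)
    then show ?thesis unfolding f_def gamma_eq_iff by (simp add: algebra_simps)
  qed
  moreover have "\<bar>f (i + 1) - f i\<bar> < 1" for i
    using lift_step_bounds[OF X, of i] lift_step_bounds[OF X, of "k + i"]
    unfolding f_def by (simp add: abs_less_iff algebra_simps)
  ultimately have f_const: "f i = f 0" for i
    by (rule Ints_seq_const_if_small_steps[of f])
  obtain c where c: "f 0 = of_int c"
    using \<open>f 0 \<in> \<int>\<close> by (auto elim: Ints_cases)
  have X_k: "X (k + i) = X i + 1 / real n + of_int c" for i
    using f_const[of i] c unfolding f_def by linarith
  define \<delta> where "\<delta> = 1 / real n + of_int c - of_int k * (real m / real n)"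
  have Y_k: "Y (i + k) = Y i + \<delta>" for i
    unfolding Y_def \<delta>_def using X_k[of i] by (simp add: algebra_simps add_divide_distrib)
  have "Y (0 + int n * k) = Y 0 + of_int (int n) * \<delta>"
    by (rule int_seq_translate_mult[where X = Y, OF Y_k])
  moreover have "Y (0 + k * int n) = Y 0"
    by (rule int_seq_periodic_mult[where f = Y, OF Y_n])
  ultimately have "\<delta> = 0"
    using n_pos by (simp add: mult.commute)
  then have "real n * (1 / real n + of_int c) = real n * (of_int k * (real m / real n))"
    unfolding \<delta>_def by simp
  then have "1 + of_int c * real n = of_int k * real m"
    using n_pos by (simp add: algebra_simps)
  then have "real_of_int (int m * k + (- c) * int n) = 1"
    by (simp add: algebra_simps)
  then have bezout: "int m * k + (- c) * int n = 1"
    by (simp only: of_int_eq_1_iff)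
  have "Y (i + k) = Y i" for i
    using Y_k \<open>\<delta> = 0\<close> by simp
  from int_seq_const_if_coprime_periods[where f = Y, OF this Y_n bezout]
  have "Y i = Y 0" .
  then show ?thesis
    unfolding Y_def by (simp add: diff_eq_eq)
qed

lemma Dn_symmetric_imp_sym_lift:
  assumes per: "periodic_seq n Z" and rot: "has_rotation_number \<gamma> Z (real m / real n)"
    and sym: "Dn_symmetric n Z"
  shows "\<exists>A. is_lift \<gamma> Z (sym_lift n m A)"
proof -
  obtain X where X: "is_lift \<gamma> Z X"
    and lim: "(\<lambda>k::nat. X (int k) / real k) \<longlonglongrightarrow> real m / real n"
    using rot unfolding has_rotation_number_def by blast
  have Z_X: "Z i = \<gamma> (X i)" for i
    using X unfolding is_lift_def by simp
  have X_period: "X (i + int n) = X i + real m" for i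
    using lift_translate_period[OF X per lim] n_pos by simp
  obtain k where "(\<forall>i. rotR n (Z i) = Z (k + i)) \<or> (\<forall>i. rotR n (Z i) = Z (k - i))"
    using sym rotR_in_dihedral unfolding Dn_symmetric_def by blast
  moreover have "Z 0 \<in> range \<gamma>"
    using Z_X by simp
  ultimately have "\<forall>i. rotR n (Z i) = Z (k + i)"
    using rotation_reversing_imp_preserving[OF _ per] by blast
  from lift_arithmetic_if_rotation_preserving[OF X X_period this]
  have X_i: "X i = X 0 + of_int i * (real m / real n)" for i .
  obtain k' where "(\<forall>i. reflS (Z i) = Z (k' + i)) \<or> (\<forall>i. reflS (Z i) = Z (k' - i))"
    using sym reflS_in_dihedral unfolding Dn_symmetric_def by blast
  then have "reflS (Z 0) = Z k'"
    by (elim disjE) (drule spec[of _ 0], simp)+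
  then have "\<gamma> (- X 0) = \<gamma> (X k')"
    unfolding Z_X gamma_reflS .
  then obtain z where z: "- X 0 - X k' = of_int z"
    unfolding gamma_eq_iff by (auto elim: Ints_cases)
  define A where "A = - (z * int n + k' * int m)"
  have "2 * X 0 = - of_int z - of_int k' * (real m / real n)"
    using z X_i[of k'] by linarith
  then have X_0: "X 0 = real_of_int A / (2 * real n)"
    using n_pos unfolding A_def by (simp add: field_simps)
  have "sym_lift n m A i = X i" for i
    unfolding sym_lift_def X_0 X_i[of i] by simp
  then show ?thesis
    using X by (metis ext)
qed

end

lemma sym_lift_add:
  "sym_lift n m A (i + k) = sym_lift n m A i + real m / real n * real_of_int k"
  unfolding sym_lift_def by (simp add: algebra_simps add_divide_distrib)

lemma sym_lift_diff:
  assumes "0 < n"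
  shows "sym_lift n m A i - sym_lift n m A' j
           = real_of_int (A - A' + 2 * int m * (i - j)) / real (2 * n)"
  unfolding sym_lift_def using assms by (simp add: field_simps)

lemma sym_lift_diff_const_iff_even:
  assumes "0 < n"
  shows "(\<exists>j::int. \<forall>i. sym_lift n m A i - sym_lift n m A' i = real_of_int j / real n)
           \<longleftrightarrow> even (A - A')"
proof
  assume "\<exists>j::int. \<forall>i. sym_lift n m A i - sym_lift n m A' i = real_of_int j / real n"
  then obtain j :: int where "\<forall>i. sym_lift n m A i - sym_lift n m A' i = real_of_int j / real n" ..
  then have "real_of_int (A - A') / real (2 * n) = real_of_int j / real n"
    using sym_lift_diff[OF assms, of m A 0 A' 0] by simp
  then have "real_of_int (A - A') = real_of_int j / real n * real (2 * n)"
    using assms by (simp add: divide_eq_eq)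
  also have "\<dots> = real_of_int (2 * j)"
    using assms by simp
  finally show "even (A - A')"
    by (simp only: of_int_eq_iff) simp
next
  assume "even (A - A')"
  then obtain j where "A - A' = 2 * j" ..
  then have "sym_lift n m A i - sym_lift n m A' i = real_of_int j / real n" for i
    using sym_lift_diff[OF assms, of m A i A' i] by simp
  then show "\<exists>j::int. \<forall>i. sym_lift n m A i - sym_lift n m A' i = real_of_int j / real n"
    by blast
qed

locale sym_orbit_setting = equivariant_param +
  fixes m :: nat
  assumes m_pos: "0 < m" and m_less: "m < n" and coprime_m_n: "coprime m n"
begin

abbreviation sym_seq :: "int \<Rightarrow> int \<Rightarrow> complex" where
  "sym_seq A \<equiv> \<lambda>i. \<gamma> (sym_lift n m A i)"

definition sym_orbits :: "(int \<Rightarrow> complex) set" where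
  "sym_orbits = {Z. billiard_orbit \<gamma> Z \<and> periodic_seq n Z \<and>
     has_rotation_number \<gamma> Z (real m / real n) \<and> Dn_symmetric n Z \<and> birkhoff \<gamma> Z}"

lemma is_lift_sym_lift: "is_lift \<gamma> (sym_seq A) (sym_lift n m A)"
  unfolding is_lift_def sym_lift_add[where k = 1, simplified] using m_pos m_less by simp

lemma is_lift_sym_lift_iff: "is_lift \<gamma> Z (sym_lift n m A) \<longleftrightarrow> Z = sym_seq A"
  using is_lift_sym_lift unfolding is_lift_def by auto

lemma sym_seq_eq_iff:
  "sym_seq A i = sym_seq A' j \<longleftrightarrow> 2 * int n dvd A - A' + 2 * int m * (i - j)"
proof -
  have "0 < 2 * n" using n_pos by simp
  from of_int_divide_in_Ints_iff[OF this]
  have "real_of_int a / real (2 * n) \<in> \<int> \<longleftrightarrow> 2 * int n dvd a" for a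
    by (simp only: of_nat_mult of_nat_numeral)
  then show ?thesis
    unfolding gamma_eq_iff sym_lift_diff[OF n_pos] .
qed

lemma billiard_orbit_sym_seq: "billiard_orbit \<gamma> (sym_seq A)"
  unfolding billiard_orbit_def
proof (intro conjI allI impI)
  show "billiard_seq \<gamma> (sym_seq A)"
    by (rule is_lift_imp_billiard_seq[OF is_lift_sym_lift])
  fix i x
  assume "\<gamma> x = sym_seq A i"
  then obtain t where x: "x = sym_lift n m A i + of_int t"
    unfolding gamma_eq_iff by (auto elim!: Ints_cases simp: algebra_simps)
  define b where "b = A + 2 * int m * i + 2 * int n * t"
  have "2 * x = real_of_int b / real n"
    unfolding b_def x sym_lift_def using n_pos by (simp add: field_simps)
  moreover obtain c where c: "norm c = 1" and "\<forall>y. \<gamma> (real_of_int b / real n - y) = c * cnj (\<gamma> y)"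
    using gamma_reflection by blast
  ultimately have reflection: "\<gamma> (2 * x - y) = c * cnj (\<gamma> y)" for y
    by simp
  have law: "inner ((\<gamma> (x - s) - \<gamma> x) / of_real (norm (\<gamma> (x - s) - \<gamma> x))
               + (\<gamma> (x + s) - \<gamma> x) / of_real (norm (\<gamma> (x + s) - \<gamma> x)))
           (vector_derivative \<gamma> (at x)) = 0" for s
    by (rule reflection_law_at_symmetry_point[OF gamma_differentiable reflection c])
  have "sym_seq A (i + k) = \<gamma> (x + real m / real n * of_int k)" for k
    unfolding x sym_lift_add gamma_eq_iff by simp
  from this[of 1] this[of "- 1"] law[of "real m / real n"] \<open>\<gamma> x = sym_seq A i\<close>
  show "inner ((sym_seq A (i - 1) - sym_seq A i) / of_real (norm (sym_seq A (i - 1) - sym_seq A i))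
             + (sym_seq A (i + 1) - sym_seq A i) / of_real (norm (sym_seq A (i + 1) - sym_seq A i)))
           (vector_derivative \<gamma> (at x)) = 0"
    by simp
qed

lemma Dn_symmetric_sym_seq: "Dn_symmetric n (sym_seq A)"
  unfolding Dn_symmetric_def
proof
  fix g
  assume "g \<in> dihedral n"
  then obtain a :: int where
    "(\<forall>x. g (\<gamma> x) = \<gamma> (x + a / n)) \<or> (\<forall>x. g (\<gamma> x) = \<gamma> (a / n - x))"
    using dihedral_acts_on_parameter by blast
  then show "\<exists>k. (\<forall>i. g (sym_seq A i) = sym_seq A (k + i)) \<or> (\<forall>i. g (sym_seq A i) = sym_seq A (k - i))"
  proof
    assume g: "\<forall>x. g (\<gamma> x) = \<gamma> (x + a / n)"
    obtain k where "int n dvd int m * k - a"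
      using coprime_linear_congruence_solvable[OF coprime_m_n] by blast
    moreover have "sym_lift n m A (k + i) - (sym_lift n m A i + a / n)
                     = real_of_int (int m * k - a) / real n" for i
      unfolding sym_lift_def using n_pos by (simp add: field_simps)
    ultimately have "sym_lift n m A (k + i) - (sym_lift n m A i + a / n) \<in> \<int>" for i
      by (metis of_int_divide_in_Ints_iff[OF n_pos])
    then have "\<forall>i. g (sym_seq A i) = sym_seq A (k + i)"
      using g by (metis gamma_eq_iff)
    then show ?thesis by blast
  next
    assume g: "\<forall>x. g (\<gamma> x) = \<gamma> (a / n - x)"
    obtain k where "int n dvd int m * k - (a - A)"
      using coprime_linear_congruence_solvable[OF coprime_m_n] by blast
    moreover have "sym_lift n m A (k - i) - (a / n - sym_lift n m A i)
                     = real_of_int (int m * k - (a - A)) / real n" for i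
      unfolding sym_lift_def using n_pos by (simp add: field_simps)
    ultimately have "sym_lift n m A (k - i) - (a / n - sym_lift n m A i) \<in> \<int>" for i
      by (metis of_int_divide_in_Ints_iff[OF n_pos])
    then have "\<forall>i. g (sym_seq A i) = sym_seq A (k - i)"
      using g by (metis gamma_eq_iff)
    then show ?thesis by blast
  qed
qed

lemma geom_equal_sym_seq_iff: "geom_equal (sym_seq A) (sym_seq A') \<longleftrightarrow> even (A - A')"
proof
  assume "geom_equal (sym_seq A) (sym_seq A')"
  then obtain k where "sym_seq A 0 = sym_seq A' k"
    unfolding geom_equal_def by (metis add.right_neutral diff_zero)
  then have "2 dvd A - A' + 2 * int m * (0 - k)"
    unfolding sym_seq_eq_iff by (rule dvd_trans[rotated]) simp
  then show "even (A - A')"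
    by (simp add: dvd_add_left_iff)
next
  assume "even (A - A')"
  then obtain j where j: "A - A' = 2 * j" ..
  obtain k where "int n dvd int m * k - j"
    using coprime_linear_congruence_solvable[OF coprime_m_n] by blast
  then have "2 * int n dvd 2 * (int m * k - j)"
    by (rule mult_dvd_mono[OF dvd_refl])
  moreover have "A - A' + 2 * int m * (i - (k + i)) = - (2 * (int m * k - j))" for i
    unfolding j by (simp add: algebra_simps)
  ultimately have "sym_seq A i = sym_seq A' (k + i)" for i
    unfolding sym_seq_eq_iff by (metis dvd_minus_iff)
  then show "geom_equal (sym_seq A) (sym_seq A')"
    unfolding geom_equal_def by blast
qed

lemma periodic_sym_seq: "periodic_seq n (sym_seq A)"
  unfolding periodic_seq_def sym_lift_add gamma_eq_iff using n_pos by simp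

lemma rotation_number_sym_seq: "has_rotation_number \<gamma> (sym_seq A) (real m / real n)"
proof -
  have "sym_lift n m A (int (Suc k)) / real (Suc k)
          = (real_of_int A / (2 * real n)) / real (Suc k) + real m / real n" for k
    unfolding sym_lift_def by (simp del: of_nat_Suc add: add_divide_distrib)
  moreover have "(\<lambda>k. (real_of_int A / (2 * real n)) / real (Suc k) + real m / real n)
                   \<longlonglongrightarrow> 0 + real m / real n"
    by (intro tendsto_add LIMSEQ_Suc[OF lim_const_over_n] tendsto_const)
  ultimately have "(\<lambda>k. sym_lift n m A (int (Suc k)) / real (Suc k)) \<longlonglongrightarrow> real m / real n"
    by simp
  then have "(\<lambda>k. sym_lift n m A (int k) / real k) \<longlonglongrightarrow> real m / real n"
    by (rule filterlim_sequentially_Suc[THEN iffD1])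
  then show ?thesis
    unfolding has_rotation_number_def using is_lift_sym_lift by blast
qed

lemma birkhoff_sym_seq: "birkhoff \<gamma> (sym_seq A)"
proof -
  have "\<forall>i j l k. sym_lift n m A i \<le> sym_lift n m A j + l \<longrightarrow>
      sym_lift n m A (i + k) \<le> sym_lift n m A (j + k) + l"
    by (simp add: sym_lift_add)
  then show ?thesis
    unfolding birkhoff_def using is_lift_sym_lift by blast
qed

lemma sym_seq_in_sym_orbits: "sym_seq A \<in> sym_orbits"
  unfolding sym_orbits_def
  using billiard_orbit_sym_seq periodic_sym_seq rotation_number_sym_seq Dn_symmetric_sym_seq
    birkhoff_sym_seq by blast

lemma Dn_symmetric_iff_sym_lift:
  assumes "periodic_seq n Z" and "has_rotation_number \<gamma> Z (real m / real n)"
  shows "Dn_symmetric n Z \<longleftrightarrow> (\<exists>A. is_lift \<gamma> Z (sym_lift n m A))"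
  using Dn_symmetric_imp_sym_lift[OF assms] Dn_symmetric_sym_seq
  by (auto simp: is_lift_sym_lift_iff)

lemma sym_orbits_two_classes:
  "\<exists>Z1\<in>sym_orbits. \<exists>Z2\<in>sym_orbits. \<not> geom_equal Z1 Z2 \<and>
     (\<forall>Z\<in>sym_orbits. geom_equal Z Z1 \<or> geom_equal Z Z2)"
proof (intro bexI conjI ballI)
  show "\<not> geom_equal (sym_seq 0) (sym_seq 1)"
    unfolding geom_equal_sym_seq_iff by simp
  fix Z
  assume "Z \<in> sym_orbits"
  then obtain A where Z: "Z = sym_seq A"
    unfolding sym_orbits_def using Dn_symmetric_imp_sym_lift is_lift_sym_lift_iff by blast
  have "even (A - 0) \<or> even (A - 1)"
    by presburger
  then show "geom_equal Z (sym_seq 0) \<or> geom_equal Z (sym_seq 1)"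
    unfolding Z geom_equal_sym_seq_iff .
qed (rule sym_seq_in_sym_orbits)+

end

theorem mainTheorem15:
  fixes m n :: nat and \<gamma> :: "real \<Rightarrow> complex"
  assumes "coprime m n" and "1 \<le> m" and "m \<le> n - 1"
    and "Dn_billiard_param n \<gamma>"
  shows
    "(\<forall>Z. billiard_seq \<gamma> Z \<and> periodic_seq n Z \<and> has_rotation_number \<gamma> Z (real m / real n)
        \<longrightarrow> (Dn_symmetric n Z \<longleftrightarrow> (\<exists>A::int. is_lift \<gamma> Z (sym_lift n m A))))
     \<and> (\<forall>A::int. billiard_orbit \<gamma> (\<lambda>i. \<gamma> (sym_lift n m A i)))
     \<and> (\<forall>A A' :: int. geom_equal (\<lambda>i. \<gamma> (sym_lift n m A i)) (\<lambda>i. \<gamma> (sym_lift n m A' i))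
          \<longleftrightarrow> (\<exists>j::int. \<forall>i. sym_lift n m A i - sym_lift n m A' i = real_of_int j / real n))
     \<and> (let Orb = {Z. billiard_orbit \<gamma> Z \<and> periodic_seq n Z \<and>
                    has_rotation_number \<gamma> Z (real m / real n) \<and>
                    Dn_symmetric n Z \<and> birkhoff \<gamma> Z}
        in \<exists>Z1\<in>Orb. \<exists>Z2\<in>Orb. \<not> geom_equal Z1 Z2 \<and>
             (\<forall>Z\<in>Orb. geom_equal Z Z1 \<or> geom_equal Z Z2))"
proof -
  have "0 < n" using assms(2,3) by linarith
  interpret equivariant_param n \<gamma>
    using Dn_billiard_param_imp_equivariant_param[OF assms(4) \<open>0 < n\<close>] .
  interpret sym_orbit_setting n \<gamma> m
    by unfold_locales (use assms in auto)
  show ?thesis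
    unfolding Let_def sym_orbits_def[symmetric]
    using Dn_symmetric_iff_sym_lift billiard_orbit_sym_seq geom_equal_sym_seq_iff
      sym_lift_diff_const_iff_even[OF n_pos] sym_orbits_two_classes
    by auto
qed

end
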